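(* Let $n$ be a positive integer. Then $$ \sum_{k=0}^{n-1}[4k-1]_{q^2}[4k-1]^2\frac{(q^{-2};q^4)_k^4}{(q^4;q^4)_k^4}q^{4k} =(q^{2n}+1)^4[n]_{q^2}^4\frac{(q^{-2};q^4)^4_{n}}{(q^4;q^4)_{n}^4} \left(2\cdot\frac{q^5+q^{4n+1}(q^{4n-2}-q^2-1)}{(q^2-1)^2}-q^{4n}\right). $$
   Context: $q$ is an indeterminate. For an integer $m$, $[m]=[m]_q=(1-q^m)/(1-q)$ and $[m]_{q^2}=(1-q^{2m})/(1-q^2)$. The $q$-shifted factorial is $(a;q)_0=1$ and $(a;q)_k=(1-a)(1-aq)\cdots(1-aq^{k-1})$ for $k\ge1$. The identity is an identity of rational functions in $q$. *)

theory Defs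
  imports "HOL-Computational_Algebra.Polynomial" "HOL-Computational_Algebra.Fraction_Field"
begin

definition qint :: "'a::field \<Rightarrow> int \<Rightarrow> 'a" where
  "qint q m = (1 - q powi m) / (1 - q)"

definition qpoch :: "'a::field \<Rightarrow> 'a \<Rightarrow> nat \<Rightarrow> 'a" where
  "qpoch a q k = (\<Prod>i<k. 1 - a * q ^ i)"

text \<open>The indeterminate q as an element of the field of rational functions R(q).\<close>
definition qvar :: "real poly fract" where
  "qvar = Fract [:0, 1:] 1"

end

theory Submission
  imports Defs
begin

text \<open>Write \<open>a(n) = (q^-2;q^4)_n / (q^4;q^4)_n\<close> and \<open>x = q^(2n)\<close>. The right-hand side is
  \<open>a(n)^4 F(x)\<close> and the \<open>k\<close>-th summand is \<open>a(k)^4 T(q^(2k))\<close> for explicit rational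
  functions \<open>F\<close>, \<open>T\<close> with \<open>F(1) = 0\<close>. Since \<open>a(n+1) / a(n) = (1 - x^2/q^2) / (1 - q^4 x^2)\<close>,
  the sum telescopes once \<open>F(q^2 x) ((1 - x^2/q^2) / (1 - q^4 x^2))^4 = F(x) + T(x)\<close>, an identity
  in two variables that becomes polynomial over the common denominator \<open>q^9 (1 - q^2)^6\<close>.\<close>

text \<open>\<open>F\<close> and \<open>T\<close>; their argument \<open>x\<close> stands for \<open>q^(2n)\<close>;
  note \<open>(1 - x^2) / (1 - q^2) = (q^(2n) + 1) [n]_(q^2)\<close>.\<close>

definition sum_closed_form :: "'a::field \<Rightarrow> 'a \<Rightarrow> 'a" where
  "sum_closed_form q x = ((1 - x^2) / (1 - q^2))^4
     * (2 * (q^5 + x^2 * q * (x^2 / q^2 - q^2 - 1)) / (q^2 - 1)^2 - x^2)"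

definition sum_term :: "'a::field \<Rightarrow> 'a \<Rightarrow> 'a" where
  "sum_term q x = (1 - x^4 / q^2) / (1 - q^2) * ((1 - x^2 / q) / (1 - q))^2 * x^2"

lemma sum_closed_form_eq:
  fixes q y :: "'a::field"
  assumes "q \<noteq> 0" "q^2 \<noteq> 1"
  shows "sum_closed_form q y = (1 - y^2)^4
     * (2 * (q^6 + y^4 - q^4 * y^2 - q^2 * y^2) - q * y^2 * (1 - q^2)^2) / (q * (1 - q^2)^6)"
proof -
  have "1 - q^2 \<noteq> 0" using assms by auto
  then show ?thesis using assms(1) unfolding sum_closed_form_def
    by (simp add: field_simps power2_commute[of "q^2"]) (simp add: algebra_simps eval_nat_numeral)
qed

lemma sum_term_eq:
  fixes q x :: "'a::field"
  assumes q: "q \<noteq> 0" and q1: "q^2 \<noteq> 1"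
  shows "sum_term q x = (q^2 - x^4) * (q - x^2)^2 * (1 + q)^2 * x^2 / (q^4 * (1 - q^2)^3)"
proof -
  have c: "1 - q^2 \<noteq> 0" and q': "1 + q \<noteq> 0"
    using q1 by (auto simp: power2_eq_square add_eq_0_iff)
  have "1 - q = (1 - q^2) / (1 + q)"
    and "1 - x^4 / q^2 = (q^2 - x^4) / q^2" and "1 - x^2 / q = (q - x^2) / q"
    using q q' by (simp_all add: field_simps power2_eq_square)
  moreover have "Q / q^2 / c * (P / q / (c / (1 + q)))^2 * x^2
      = Q * P^2 * (1 + q)^2 * x^2 / (q^4 * c^3)"
    if "c \<noteq> 0" for c Q P :: 'a
    using q q' that by (simp add: field_simps) (simp add: algebra_simps power2_eq_square power3_eq_cube)
  ultimately show ?thesis using c unfolding sum_term_def by presburger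
qed

lemma sum_closed_form_step:
  fixes q x :: "'a::field"
  assumes q: "q \<noteq> 0" and q1: "q^2 \<noteq> 1" and d: "q^4 * x^2 \<noteq> 1"
  shows "sum_closed_form q (q^2 * x) * ((1 - x^2 / q^2) / (1 - q^4 * x^2))^4
     = sum_closed_form q x + sum_term q x"
proof -
  define c where "c = 1 - q^2"
  define B where "B y = 2 * (q^6 + y^4 - q^4 * y^2 - q^2 * y^2) - q * y^2 * c^2" for y
  have c: "c \<noteq> 0" using q1 by (simp add: c_def)
  have "1 - (q^2 * x)^2 = 1 - q^4 * x^2" "1 - x^2 / q^2 = (q^2 - x^2) / q^2"
    using q by (simp_all add: field_simps power_mult_distrib flip: power_mult)
  then have cancel:
      "(1 - (q^2 * x)^2)^4 * ((1 - x^2 / q^2) / (1 - q^4 * x^2))^4 = (q^2 - x^2)^4 / q^8"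
    using d by (simp add: power_divide power_mult_distrib flip: power_mult)
  have numerators: "(q^2 - x^2)^4 * B (q^2 * x)
      = q^8 * (1 - x^2)^4 * B x + (q^2 - x^4) * (q - x^2)^2 * (1 + q)^2 * x^2 * q^5 * c^3"
    unfolding B_def c_def
    by (simp add: algebra_simps power2_eq_square power3_eq_cube power4_eq_xxxx eval_nat_numeral)
  have "sum_closed_form q (q^2 * x) * ((1 - x^2 / q^2) / (1 - q^4 * x^2))^4
      = (1 - (q^2 * x)^2)^4 * ((1 - x^2 / q^2) / (1 - q^4 * x^2))^4 * B (q^2 * x) / (q * c^6)"
    unfolding sum_closed_form_eq[OF q q1] B_def c_def by simp
  also have "\<dots> = (q^2 - x^2)^4 * B (q^2 * x) / (q^9 * c^6)"
    unfolding cancel using q by (simp add: field_simps eval_nat_numeral)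
  also have "\<dots> = (q^8 * (1 - x^2)^4 * B x
      + (q^2 - x^4) * (q - x^2)^2 * (1 + q)^2 * x^2 * q^5 * c^3) / (q^9 * c^6)"
    unfolding numerators ..
  also have "\<dots> = (1 - x^2)^4 * B x / (q * c^6)
      + (q^2 - x^4) * (q - x^2)^2 * (1 + q)^2 * x^2 / (q^4 * c^3)"
    using q c by (simp add: field_simps eval_nat_numeral)
  also have "\<dots> = sum_closed_form q x + sum_term q x"
    unfolding sum_closed_form_eq[OF q q1] sum_term_eq[OF q q1] B_def c_def ..
  finally show ?thesis .
qed

lemma qpoch_Suc: "qpoch a q (Suc n) = qpoch a q n * (1 - a * q ^ n)"
  unfolding qpoch_def by simp

lemma power_int_4k_minus_1:
  fixes q :: "'a::field"
  assumes "q \<noteq> 0"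
  shows "q powi (4 * int k - 1) = (q^(2*k))^2 / q"
proof -
  have "q powi (4 * int k - 1) = q powi int (4 * k) / q"
    using assms by (simp add: power_int_diff)
  also have "\<dots> = (q^(2*k))^2 / q"
    by (simp only: power_int_of_nat flip: power_mult) (simp add: mult.commute)
  finally show ?thesis .
qed

lemma term_eq_sum_term:
  fixes q P Q :: "'a::field"
  assumes "q \<noteq> 0"
  shows "qint (q^2) (4 * int k - 1) * (qint q (4 * int k - 1))^2 * P^4 / Q^4 * q^(4*k)
    = (P / Q)^4 * sum_term q (q^(2*k))"
proof -
  have "(q^2) powi (4 * int k - 1) = (q^(2*k))^4 / q^2"
    using assms by (simp add: power_int_4k_minus_1 flip: power_mult)
  moreover have "q powi (4 * int k - 1) = (q^(2*k))^2 / q"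
    using assms by (rule power_int_4k_minus_1)
  moreover have "q^(4*k) = (q^(2*k))^2"
    by (simp flip: power_mult add: mult.commute)
  ultimately show ?thesis
    unfolding qint_def sum_term_def by (simp add: power_divide) (simp add: mult_ac)
qed

lemma qpoch_ratio_Suc:
  fixes q :: "'a::field"
  shows "qpoch (q powi (-2)) (q^4) (Suc n) / qpoch (q^4) (q^4) (Suc n)
    = qpoch (q powi (-2)) (q^4) n / qpoch (q^4) (q^4) n
      * ((1 - (q^(2*n))^2 / q^2) / (1 - q^4 * (q^(2*n))^2))"
proof -
  have "(q^4)^n = (q^(2*n))^2"
    by (simp flip: power_mult add: mult.commute)
  then show ?thesis
    unfolding qpoch_Suc by (simp add: power_int_minus_divide)
qed

lemma sum_eq_sum_closed_form:
  fixes q :: "'a::field"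
  assumes q: "q \<noteq> 0" and no_root_of_unity: "\<And>m. m > 0 \<Longrightarrow> q^m \<noteq> 1"
  shows "(\<Sum>k<n. qint (q^2) (4 * int k - 1) * (qint q (4 * int k - 1))^2
        * (qpoch (q powi (-2)) (q^4) k)^4 / (qpoch (q^4) (q^4) k)^4 * q^(4*k))
    = (qpoch (q powi (-2)) (q^4) n / qpoch (q^4) (q^4) n)^4 * sum_closed_form q (q^(2*n))"
proof (induction n)
  case 0
  then show ?case by (simp add: sum_closed_form_def)
next
  case (Suc n)
  define x where "x = q^(2*n)"
  define a where "a = qpoch (q powi (-2)) (q^4) n / qpoch (q^4) (q^4) n"
  have "q^2 \<noteq> 1" using no_root_of_unity[of 2] by simp
  moreover have "q^4 * x^2 \<noteq> 1"
    using no_root_of_unity[of "4 * n + 4"] unfolding x_def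
    by (simp add: power_add mult.commute flip: power_mult)
  moreover have "q^(2 * Suc n) = q^2 * x"
    unfolding x_def by (simp flip: power_add)
  ultimately have "(a * ((1 - x^2 / q^2) / (1 - q^4 * x^2)))^4 * sum_closed_form q (q^(2 * Suc n))
      = a^4 * (sum_closed_form q (q^2 * x) * ((1 - x^2 / q^2) / (1 - q^4 * x^2))^4)"
    by (simp only: power_mult_distrib mult_ac)
  also have "\<dots> = a^4 * sum_closed_form q x + a^4 * sum_term q x"
    using sum_closed_form_step[OF q \<open>q^2 \<noteq> 1\<close> \<open>q^4 * x^2 \<noteq> 1\<close>] by (simp add: distrib_left)
  finally show ?case
    using Suc.IH
    unfolding sum.lessThan_Suc term_eq_sum_term[OF q] qpoch_ratio_Suc
      x_def[symmetric] a_def[symmetric]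
    by simp
qed

lemma qvar_power: "qvar ^ m = Fract ([:0, 1:] ^ m) 1"
  by (induction m) (simp_all add: qvar_def One_fract_def)

lemma qvar_nonzero: "qvar \<noteq> 0"
  unfolding qvar_def Zero_fract_def by (simp add: eq_fract)

lemma qvar_power_neq_1:
  assumes "m > 0"
  shows "qvar ^ m \<noteq> 1"
proof
  assume "qvar ^ m = 1"
  then have "[:0, 1::real:] ^ m = 1"
    unfolding qvar_power One_fract_def by (simp add: eq_fract)
  then have "degree ([:0, 1::real:] ^ m) = 0" by simp
  moreover have "degree ([:0, 1::real:] ^ m) = m" by (simp add: degree_power_eq)
  ultimately show False using assms by simp
qed

theorem theorem2:
  fixes n :: nat
  assumes "n \<ge> 1"
  shows "(let q = qvar in
     (\<Sum>k<n. qint (q^2) (4 * int k - 1) * (qint q (4 * int k - 1))^2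
        * (qpoch (q powi (-2)) (q^4) k)^4 / (qpoch (q^4) (q^4) k)^4 * q^(4*k))
   = (q^(2*n) + 1)^4 * (qint (q^2) (int n))^4
        * (qpoch (q powi (-2)) (q^4) n)^4 / (qpoch (q^4) (q^4) n)^4
        * (2 * (q^5 + q^(4*n+1) * (q^(4*n-2) - q^2 - 1)) / (q^2 - 1)^2 - q^(4*n)))"
proof -
  define q where "q = qvar"
  define x where "x = q^(2*n)"
  define P where "P = qpoch (q powi (-2)) (q^4) n"
  define Q where "Q = qpoch (q^4) (q^4) n"
  have q: "q \<noteq> 0" using qvar_nonzero by (simp add: q_def)
  have q4n: "q^(4*n) = x^2"
    unfolding x_def by (simp flip: power_mult add: mult.commute)
  then have q4n1: "q^(4*n+1) = x^2 * q" by simp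
  have q4n2: "q^(4*n-2) = x^2 / q^2"
  proof -
    have "4 * n = (4 * n - 2) + 2" using assms by simp
    then have "q^(4*n) = q^(4*n-2) * q^2" by (metis power_add)
    then show ?thesis using q q4n by (simp add: field_simps)
  qed
  have qint_n: "qint (q^2) (int n) = (1 - x) / (1 - q^2)"
    unfolding qint_def x_def by (simp add: power_int_of_nat power_mult)
  have "1 - x^2 = (x + 1) * (1 - x)"
    by (simp add: algebra_simps power2_eq_square)
  then have "(x + 1)^4 * ((1 - x) / (1 - q^2))^4 * P^4 / Q^4 * E
      = (P / Q)^4 * (((1 - x^2) / (1 - q^2))^4 * E)"
    for E by (simp add: power_divide power_mult_distrib mult_ac)
  then show ?thesis
    using sum_eq_sum_closed_form[OF q qvar_power_neq_1[folded q_def], of n]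
    unfolding Let_def q_def[symmetric] x_def[symmetric] P_def[symmetric] Q_def[symmetric]
      qint_n q4n q4n1 q4n2 sum_closed_form_def
    by simp
qed

end
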